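(* Let $n\ge 2$ and $\sigma\ge 0$. The matrix $\mathbf A_\sigma^{-1}\mathbf B$ is diagonalizable over $\mathbb R$, so its eigenvectors form a basis of $\mathbb R^n$. Its eigenvalues are real and, ordered decreasingly, satisfy $$1\ \ge\ \lambda_1(\mathbf A_\sigma^{-1}\mathbf B)\ \ge\ \dots\ \ge\ \lambda_{n-1}(\mathbf A_\sigma^{-1}\mathbf B)\ >\ 0\ >\ \lambda_n(\mathbf A_\sigma^{-1}\mathbf B)\ \ge\ -1 .$$ In particular, $\mathbf A_\sigma^{-1}\mathbf B$ has exactly one negative eigenvalue.
   Context: Let $\mathbf L\in\mathbb R^{n\times n}$ be the periodic discrete one-dimensional Laplacian, i.e. $(\mathbf L\mathbf x)_i=x_{i-1}-2x_i+x_{i+1}$ with indices taken modulo $n$. For $n\ge3$ this is the circulant matrix with $-2$ on the diagonal and $1$ on the sub- and superdiagonal and in the corners $(1,n),(n,1)$. For $\sigma\ge 0$ set $\mathbf A_\sigma=\mathbf I-\sigma\mathbf L$, which is symmetric positive definite. Let $\mathbf B=\mathrm{diag}(1,\dots,1,-1)\in\mathbb R^{n\times n}$. *)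

theory Defs
  imports "Jordan_Normal_Form.Gauss_Jordan_Elimination" "Jordan_Normal_Form.Char_Poly"
begin

definition lap_mat :: "nat \<Rightarrow> real mat" where
  "lap_mat n = mat n n (\<lambda>(i,j).
      (if j = (i + n - 1) mod n then 1 else 0) - (if j = i then 2 else 0)
    + (if j = (i + 1) mod n then 1 else 0))"

definition A_mat :: "real \<Rightarrow> nat \<Rightarrow> real mat" where
  "A_mat \<sigma> n = 1\<^sub>m n - \<sigma> \<cdot>\<^sub>m lap_mat n"

definition B_mat :: "nat \<Rightarrow> real mat" where
  "B_mat n = mat n n (\<lambda>(i,j). if i = j then (if i = n - 1 then -1 else 1) else 0)"

text \<open>The inverse of A_sigma (A_sigma is invertible; mat_inverse returns Some of the inverse).\<close>
definition A_inv :: "real \<Rightarrow> nat \<Rightarrow> real mat" where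
  "A_inv \<sigma> n = the (mat_inverse (A_mat \<sigma> n))"

end

theory Submission
  imports Defs "Jordan_Normal_Form.Jordan_Normal_Form_Uniqueness"
    "Jordan_Normal_Form.Jordan_Normal_Form_Existence"
begin

text \<open>
  \<open>A = I - \<sigma> L\<close> is symmetric and dominates the identity, since the periodic Laplacian is negative
  semidefinite. As \<open>A (A\<^sup>-\<^sup>1 B) = B\<close> is symmetric, \<open>M = A\<^sup>-\<^sup>1 B\<close> is self-adjoint for the inner product
  \<open>\<langle>x, y\<rangle> = x \<bullet> A y\<close>, hence diagonalizable over the reals. An eigenpair \<open>(\<mu>, v)\<close> of \<open>M\<close> satisfies
  \<open>B v = \<mu> A v\<close>, so \<open>\<mu> = v \<bullet> B v / v \<bullet> A v\<close>; as \<open>\<bar>v \<bullet> B v\<bar> \<le> v \<bullet> v \<le> v \<bullet> A v\<close> and \<open>B\<close> is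
  invertible, \<open>0 < \<bar>\<mu>\<bar> \<le> 1\<close>. Since \<open>det M = det B / det A = -1 / det A < 0\<close>, some eigenvalue is
  negative. Two independent eigenvectors with negative eigenvalues would span a plane on which
  \<open>v \<bullet> B v\<close> is negative definite; but that plane contains a nonzero vector with vanishing last
  coordinate, on which \<open>v \<bullet> B v \<ge> 0\<close>.
\<close>

section \<open>Matrices and quadratic forms\<close>

lemma scalar_prod_self_pos:
  fixes v :: "real vec"
  assumes "v \<in> carrier_vec n" "v \<noteq> 0\<^sub>v n"
  shows "0 < v \<bullet> v"
  using conjugate_square_greater_0_vec[OF assms(1)] assms(2) by simp

lemma mult_mat_vec_zero_vec: "A \<in> carrier_mat nr nc \<Longrightarrow> A *\<^sub>v 0\<^sub>v nc = 0\<^sub>v nr"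
  by (intro eq_vecI) auto

lemma smult_mat_mult_vec:
  "A \<in> carrier_mat nr nc \<Longrightarrow> v \<in> carrier_vec nc \<Longrightarrow> (c \<cdot>\<^sub>m A) *\<^sub>v v = c \<cdot>\<^sub>v (A *\<^sub>v v)"
  by (rule eq_vecI) (auto simp: scalar_prod_def sum_distrib_left ac_simps)

lemma transpose_smult_mat: "transpose_mat (c \<cdot>\<^sub>m A) = c \<cdot>\<^sub>m transpose_mat A"
  by (rule eq_matI) auto

lemma symmetric_form_comm:
  fixes G :: "'a :: comm_semiring_0 mat"
  assumes G: "G \<in> carrier_mat n n" and sym: "transpose_mat G = G"
    and x: "x \<in> carrier_vec n" and y: "y \<in> carrier_vec n"
  shows "x \<bullet> (G *\<^sub>v y) = y \<bullet> (G *\<^sub>v x)"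
proof -
  have "x \<bullet> (G *\<^sub>v y) = (transpose_mat G *\<^sub>v y) \<bullet> x"
    using G x y sym by (simp add: comm_scalar_prod[of _ n])
  also have "\<dots> = y \<bullet> (G *\<^sub>v x)" by (rule transpose_vec_mult_scalar[OF G x y])
  finally show ?thesis .
qed

lemma of_real_mat_mult_vec_Re_Im:
  fixes X :: "real mat" and v :: "complex vec"
  assumes "X \<in> carrier_mat nr nc" "v \<in> carrier_vec nc"
  shows "map_vec Re (map_mat complex_of_real X *\<^sub>v v) = X *\<^sub>v map_vec Re v"
    and "map_vec Im (map_mat complex_of_real X *\<^sub>v v) = X *\<^sub>v map_vec Im v"
  using assms by (auto intro!: eq_vecI simp: scalar_prod_def Re_sum Im_sum)

lemma form_lincomb:
  fixes G :: "'a :: field mat"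
  assumes "G \<in> carrier_mat n n" "a \<in> carrier_vec n" "b \<in> carrier_vec n"
  shows "(s \<cdot>\<^sub>v a + t \<cdot>\<^sub>v b) \<bullet> (G *\<^sub>v (s \<cdot>\<^sub>v a + t \<cdot>\<^sub>v b))
    = s * s * (a \<bullet> (G *\<^sub>v a)) + s * t * (a \<bullet> (G *\<^sub>v b)) + t * s * (b \<bullet> (G *\<^sub>v a)) + t * t * (b \<bullet> (G *\<^sub>v b))"
  using assms
  by (simp add: mult_add_distrib_mat_vec mult_mat_vec scalar_prod_add_distrib[of _ n]
      add_scalar_prod_distrib[of _ n] algebra_simps)

lemma diagonal_mat_mult_index:
  assumes "D \<in> carrier_mat n n" "diagonal_mat D" "A \<in> carrier_mat m n" "i < m" "j < n"
  shows "(A * D) $$ (i, j) = A $$ (i, j) * D $$ (j, j)"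
proof -
  have "(A * D) $$ (i, j) = (\<Sum>k \<in> {0..<n}. A $$ (i, k) * D $$ (k, j))"
    using assms by (simp add: scalar_prod_def)
  also have "\<dots> = (\<Sum>k \<in> {0..<n}. if k = j then A $$ (i, j) * D $$ (j, j) else 0)"
    using assms unfolding diagonal_mat_def by (intro sum.cong) auto
  finally show ?thesis using assms by simp
qed

lemma jordan_matrix_diagonal:
  assumes "\<forall>(k, a) \<in> set n_as. k = 1"
  shows "diagonal_mat (jordan_matrix n_as)"
  using assms
proof (induct n_as)
  case Nil
  show ?case by (simp add: diagonal_mat_def)
next
  case (Cons ka n_as)
  then obtain a where ka: "ka = (1, a)" by auto
  from Cons show ?case
    unfolding ka diagonal_mat_def jordan_matrix_Cons by (auto simp: jordan_block_def)
qed

lemma sum_list_mono_eq_imp_eq: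
  fixes f g :: "'a \<Rightarrow> nat"
  assumes "\<forall>x \<in> set xs. f x \<le> g x" and "(\<Sum>x\<leftarrow>xs. f x) = (\<Sum>x\<leftarrow>xs. g x)"
  shows "\<forall>x \<in> set xs. f x = g x"
  using assms
proof (induct xs)
  case (Cons y xs)
  have "(\<Sum>x\<leftarrow>xs. f x) \<le> (\<Sum>x\<leftarrow>xs. g x)" using Cons.prems(1) by (intro sum_list_mono) auto
  with Cons show ?case by auto
qed simp

lemma similar_mat_wit_mult_right:
  assumes "similar_mat_wit X D P Q" "X \<in> carrier_mat n n"
  shows "X * P = P * D"
proof -
  note wit = similar_mat_witD2[OF assms(2,1)]
  have "X * P = P * D * (Q * P)"
    using wit by (simp add: assoc_mult_mat[of _ n n _ n _ n])
  thus ?thesis using wit by simp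
qed

lemma similar_mat_witI_mult_right:
  assumes carr: "X \<in> carrier_mat n n" "D \<in> carrier_mat n n" "P \<in> carrier_mat n n" "Q \<in> carrier_mat n n"
    and PQ: "P * Q = 1\<^sub>m n" and QP: "Q * P = 1\<^sub>m n" and XP: "X * P = P * D"
  shows "similar_mat_wit X D P Q"
proof (rule similar_mat_witI[OF PQ QP _ carr])
  have "X = X * P * Q" using carr PQ by (simp add: assoc_mult_mat[of _ n n _ n _ n])
  thus "X = P * D * Q" unfolding XP .
qed

lemma similar_mat_wit_invertible:
  assumes "X \<in> carrier_mat n n" "similar_mat_wit X D P Q"
  shows "invertible_mat P"
  using similar_mat_witD2[OF assms]
  unfolding invertible_mat_def inverts_mat_def square_mat.simps by auto

lemma permute_inverse_mats:
  fixes P Q :: "'a :: comm_ring_1 mat"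
  assumes P: "P \<in> carrier_mat n n" and Q: "Q \<in> carrier_mat n n"
    and PQ: "P * Q = 1\<^sub>m n" and QP: "Q * P = 1\<^sub>m n" and bij: "bij_betw p {0..<n} {0..<n}"
  shows "mat n n (\<lambda>(i, j). P $$ (i, p j)) * mat n n (\<lambda>(i, j). Q $$ (p i, j)) = 1\<^sub>m n" (is "?P' * ?Q' = _")
    and "mat n n (\<lambda>(i, j). Q $$ (p i, j)) * mat n n (\<lambda>(i, j). P $$ (i, p j)) = 1\<^sub>m n"
proof -
  have p: "p j < n" if "j < n" for j using bij_betwE[OF bij] that by auto
  show "?P' * ?Q' = 1\<^sub>m n"
  proof (rule eq_matI)
    fix i j assume "i < dim_row (1\<^sub>m n)" "j < dim_col (1\<^sub>m n :: 'a mat)"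
    hence i: "i < n" and j: "j < n" by auto
    have "(?P' * ?Q') $$ (i, j) = (\<Sum>k \<in> {0..<n}. P $$ (i, p k) * Q $$ (p k, j))"
      using i j by (simp add: scalar_prod_def)
    also have "\<dots> = (\<Sum>k \<in> {0..<n}. P $$ (i, k) * Q $$ (k, j))"
      by (rule sum.reindex_bij_betw[OF bij])
    also have "\<dots> = (P * Q) $$ (i, j)" using P Q i j by (simp add: scalar_prod_def)
    finally show "(?P' * ?Q') $$ (i, j) = 1\<^sub>m n $$ (i, j)" unfolding PQ .
  qed auto
  show "?Q' * ?P' = 1\<^sub>m n"
  proof (rule eq_matI)
    fix i j assume "i < dim_row (1\<^sub>m n)" "j < dim_col (1\<^sub>m n :: 'a mat)"
    hence i: "i < n" and j: "j < n" by auto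
    have "(?Q' * ?P') $$ (i, j) = (Q * P) $$ (p i, p j)"
      using Q P i j p[OF i] p[OF j] by (simp add: scalar_prod_def)
    thus "(?Q' * ?P') $$ (i, j) = 1\<^sub>m n $$ (i, j)"
      using QP i j p[OF i] p[OF j] inj_on_eq_iff[OF bij_betw_imp_inj_on[OF bij]] by simp
  qed auto
qed

lemma similar_mat_wit_diagonal_permute:
  fixes X D P Q :: "'a :: comm_ring_1 mat"
  assumes X: "X \<in> carrier_mat n n" and wit: "similar_mat_wit X D P Q" and diag: "diagonal_mat D"
    and bij: "bij_betw p {0..<n} {0..<n}"
  shows "similar_mat_wit X (mat n n (\<lambda>(i, j). if i = j then D $$ (p i, p i) else 0))
    (mat n n (\<lambda>(i, j). P $$ (i, p j))) (mat n n (\<lambda>(i, j). Q $$ (p i, j)))"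
    (is "similar_mat_wit X ?D' ?P' ?Q'")
proof -
  note wit' = similar_mat_witD2[OF X wit]
  have D: "D \<in> carrier_mat n n" and P: "P \<in> carrier_mat n n" and Q: "Q \<in> carrier_mat n n"
    using wit' by auto
  have p: "p j < n" if "j < n" for j using bij_betwE[OF bij] that by auto
  have carr: "?P' \<in> carrier_mat n n" "?Q' \<in> carrier_mat n n" "?D' \<in> carrier_mat n n" by auto
  have diag': "diagonal_mat ?D'" unfolding diagonal_mat_def by auto
  have "X * ?P' = ?P' * ?D'"
  proof (rule eq_matI)
    fix i j assume "i < dim_row (?P' * ?D')" "j < dim_col (?P' * ?D')"
    hence i: "i < n" and j: "j < n" by auto
    have "(X * ?P') $$ (i, j) = (X * P) $$ (i, p j)" using X P i j p[OF j] by (simp add: scalar_prod_def)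
    also have "\<dots> = P $$ (i, p j) * D $$ (p j, p j)"
      unfolding similar_mat_wit_mult_right[OF wit X]
      using diagonal_mat_mult_index[OF D diag P i p[OF j]] .
    also have "\<dots> = (?P' * ?D') $$ (i, j)"
      using diagonal_mat_mult_index[OF carr(3) diag' carr(1) i j] i j p[OF j] by simp
    finally show "(X * ?P') $$ (i, j) = (?P' * ?D') $$ (i, j)" .
  qed (use X in auto)
  thus ?thesis
    using similar_mat_witI_mult_right[OF X carr(3,1,2)] permute_inverse_mats[OF P Q _ _ bij] wit' by blast
qed

lemma similar_mat_wit_diagonal_sorted:
  fixes X D P Q :: "'a :: linordered_idom mat"
  assumes X: "X \<in> carrier_mat n n" and wit: "similar_mat_wit X D P Q" and diag: "diagonal_mat D"
  shows "\<exists>D' P' Q'. similar_mat_wit X D' P' Q' \<and> diagonal_mat D'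
    \<and> (\<forall>i j. i \<le> j \<and> j < n \<longrightarrow> D' $$ (j, j) \<le> D' $$ (i, i))"
proof -
  define xs where "xs = sort_key (\<lambda>i. - D $$ (i, i)) [0..<n]"
  have len: "length xs = n" and set: "set xs = {0..<n}" and dist: "distinct xs"
    unfolding xs_def by simp_all
  have bij: "bij_betw (\<lambda>j. xs ! j) {0..<n} {0..<n}"
    using bij_betw_nth[OF dist _ set[symmetric]] len by (simp add: lessThan_atLeast0)
  let ?D' = "mat n n (\<lambda>(i, j). if i = j then D $$ (xs ! i, xs ! i) else 0)"
  have "diagonal_mat ?D'" unfolding diagonal_mat_def by auto
  moreover have "?D' $$ (j, j) \<le> ?D' $$ (i, i)" if "i \<le> j" "j < n" for i j
    using sorted_nth_mono[OF sorted_sort_key[of "\<lambda>i. - D $$ (i, i)" "[0..<n]"], of i j] that len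
    unfolding xs_def by simp
  ultimately show ?thesis using similar_mat_wit_diagonal_permute[OF X wit diag bij] by blast
qed

lemma similar_mat_wit_diagonal_eigenvector:
  assumes X: "X \<in> carrier_mat n n" and wit: "similar_mat_wit X D P Q" and diag: "diagonal_mat D"
    and j: "j < n"
  shows "eigenvector X (col P j) (D $$ (j, j))"
proof -
  note wit' = similar_mat_witD2[OF X wit]
  have P: "P \<in> carrier_mat n n" and Q: "Q \<in> carrier_mat n n" and D: "D \<in> carrier_mat n n"
    using wit' by auto
  have "col P j \<noteq> 0\<^sub>v n"
  proof
    assume z: "col P j = 0\<^sub>v n"
    have "(Q * P) $$ (j, j) = row Q j \<bullet> col P j" using P Q j by simp
    also have "\<dots> = 0" unfolding z using Q j by simp
    finally have "(Q * P) $$ (j, j) = 0" .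
    thus False unfolding wit'(2) using j by simp
  qed
  moreover have "X *\<^sub>v col P j = D $$ (j, j) \<cdot>\<^sub>v col P j"
  proof (rule eq_vecI)
    fix i assume "i < dim_vec (D $$ (j, j) \<cdot>\<^sub>v col P j)"
    hence i: "i < n" using P by simp
    have "(X *\<^sub>v col P j) $ i = (X * P) $$ (i, j)" using X P i j by simp
    also have "\<dots> = (P * D) $$ (i, j)" unfolding similar_mat_wit_mult_right[OF wit X] ..
    finally have "(X *\<^sub>v col P j) $ i = (P * D) $$ (i, j)" .
    thus "(X *\<^sub>v col P j) $ i = (D $$ (j, j) \<cdot>\<^sub>v col P j) $ i"
      using diagonal_mat_mult_index[OF D diag P i j] i j P by simp
  qed (use X P in auto)
  ultimately show ?thesis unfolding eigenvector_def using X P col_dim[of P j] by simp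
qed

lemma similar_mat_wit_diagonal_eigenvalue_iff:
  fixes X :: "'a :: field mat"
  assumes X: "X \<in> carrier_mat n n" and wit: "similar_mat_wit X D P Q" and diag: "diagonal_mat D"
  shows "eigenvalue X \<mu> \<longleftrightarrow> (\<exists>j < n. \<mu> = D $$ (j, j))"
proof -
  note wit' = similar_mat_witD2[OF X wit]
  have D: "D \<in> carrier_mat n n" using wit' by auto
  have "upper_triangular D" using diag D unfolding diagonal_mat_def upper_triangular_def by auto
  hence "char_poly X = (\<Prod>a \<leftarrow> diag_mat D. [:- a, 1:])"
    using char_poly_similar[of X D] char_poly_upper_triangular[OF D] wit unfolding similar_mat_def by auto
  thus ?thesis
    unfolding eigenvalue_root_char_poly[OF X] using D
    by (auto simp: poly_prod_list_zero_iff diag_mat_def)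
qed

lemma similar_mat_wit_diagonal_det:
  assumes X: "X \<in> carrier_mat n n" and wit: "similar_mat_wit X D P Q" and diag: "diagonal_mat D"
  shows "det X = (\<Prod>j < n. D $$ (j, j))"
proof -
  have D: "D \<in> carrier_mat n n" using similar_mat_witD2[OF X wit] by auto
  have "upper_triangular D" using diag D unfolding diagonal_mat_def upper_triangular_def by auto
  hence "det D = (\<Prod>j < n. D $$ (j, j))"
    using det_upper_triangular[OF _ D] D by (simp add: prod_list_diag_prod atLeast0LessThan)
  thus ?thesis using det_similar[of X D] wit unfolding similar_mat_def by auto
qed

lemma cols_independent:
  fixes P Q :: "'a :: field mat"
  assumes P: "P \<in> carrier_mat n n" and Q: "Q \<in> carrier_mat n n" and QP: "Q * P = 1\<^sub>m n"
    and ij: "i < n" "j < n" "i \<noteq> j" and z: "s \<cdot>\<^sub>v col P i + t \<cdot>\<^sub>v col P j = 0\<^sub>v n"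
  shows "s = 0 \<and> t = 0"
proof -
  have unit: "Q *\<^sub>v col P k = unit_vec n k" if "k < n" for k
    using col_mult2[OF Q P that] QP that by simp
  have col: "col P k \<in> carrier_vec n" for k using col_dim[of P k] P by simp
  have "s \<cdot>\<^sub>v unit_vec n i + t \<cdot>\<^sub>v unit_vec n j = Q *\<^sub>v (s \<cdot>\<^sub>v col P i + t \<cdot>\<^sub>v col P j)"
    using Q col unit[OF ij(1)] unit[OF ij(2)] by (simp add: mult_add_distrib_mat_vec mult_mat_vec)
  also have "\<dots> = 0\<^sub>v n" unfolding z using Q by (rule mult_mat_vec_zero_vec)
  finally have e: "s \<cdot>\<^sub>v unit_vec n i + t \<cdot>\<^sub>v unit_vec n j = 0\<^sub>v n" .
  show ?thesis
    using arg_cong[OF e, of "\<lambda>v. v $ i"] arg_cong[OF e, of "\<lambda>v. v $ j"] ij by simp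
qed

section \<open>Self-adjoint matrices are diagonalizable over the reals\<close>

definition pos_def_mat :: "real mat \<Rightarrow> bool" where
  "pos_def_mat G \<longleftrightarrow> (\<forall>v \<in> carrier_vec (dim_row G). v \<noteq> 0\<^sub>v (dim_row G) \<longrightarrow> 0 < v \<bullet> (G *\<^sub>v v))"

lemma pos_def_matD:
  "pos_def_mat G \<Longrightarrow> G \<in> carrier_mat n n \<Longrightarrow> v \<in> carrier_vec n \<Longrightarrow> v \<noteq> 0\<^sub>v n \<Longrightarrow> 0 < v \<bullet> (G *\<^sub>v v)"
  unfolding pos_def_mat_def by auto

lemma pos_def_mat_nonneg:
  assumes "pos_def_mat G" "G \<in> carrier_mat n n" "v \<in> carrier_vec n"
  shows "0 \<le> v \<bullet> (G *\<^sub>v v)"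
  using pos_def_matD[OF assms] assms(2,3) by (cases "v = 0\<^sub>v n") (auto intro: less_imp_le)

lemma pos_def_matI_form_ge:
  assumes "G \<in> carrier_mat n n" and "\<And>v. v \<in> carrier_vec n \<Longrightarrow> v \<bullet> v \<le> v \<bullet> (G *\<^sub>v v)"
  shows "pos_def_mat G"
  unfolding pos_def_mat_def using assms by (auto intro: less_le_trans[OF scalar_prod_self_pos])

lemma pos_def_mat_one: "pos_def_mat (1\<^sub>m n)"
  unfolding pos_def_mat_def by (auto intro: scalar_prod_self_pos)

text \<open>\<open>X\<close> is self-adjoint for the inner product \<open>\<langle>x, y\<rangle> = x \<bullet> G y\<close>.\<close>

locale self_adjoint_wrt =
  fixes n :: nat and G X :: "real mat"
  assumes G: "G \<in> carrier_mat n n" and X: "X \<in> carrier_mat n n"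
    and G_sym: "transpose_mat G = G" and G_pos_def: "pos_def_mat G"
    and GX_sym: "transpose_mat (G * X) = G * X"
begin

lemma form_comm: "x \<in> carrier_vec n \<Longrightarrow> y \<in> carrier_vec n \<Longrightarrow> x \<bullet> (G *\<^sub>v (X *\<^sub>v y)) = y \<bullet> (G *\<^sub>v (X *\<^sub>v x))"
  using symmetric_form_comm[OF _ GX_sym, of n x y] G X by (simp add: assoc_mult_mat_vec[of _ n n _ n])

lemma complex_eigenvalue_real:
  assumes ev: "eigenvalue (map_mat complex_of_real X) \<mu>"
  shows "Im \<mu> = 0"
proof -
  from ev obtain v where v: "v \<in> carrier_vec n" "v \<noteq> 0\<^sub>v n"
    and Xv: "map_mat complex_of_real X *\<^sub>v v = \<mu> \<cdot>\<^sub>v v"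
    unfolding eigenvalue_def eigenvector_def using X by auto
  define a b where "a = map_vec Re v" and "b = map_vec Im v"
  have a: "a \<in> carrier_vec n" and b: "b \<in> carrier_vec n" unfolding a_def b_def using v by auto
  have "X *\<^sub>v a = map_vec Re (\<mu> \<cdot>\<^sub>v v)" "X *\<^sub>v b = map_vec Im (\<mu> \<cdot>\<^sub>v v)"
    using of_real_mat_mult_vec_Re_Im[OF X v(1)] unfolding Xv a_def b_def by simp_all
  hence "X *\<^sub>v a = Re \<mu> \<cdot>\<^sub>v a - Im \<mu> \<cdot>\<^sub>v b" "X *\<^sub>v b = Im \<mu> \<cdot>\<^sub>v a + Re \<mu> \<cdot>\<^sub>v b"
    using v(1) unfolding a_def b_def by (auto intro!: eq_vecI)
  hence "Im \<mu> * (a \<bullet> (G *\<^sub>v a) + b \<bullet> (G *\<^sub>v b)) = a \<bullet> (G *\<^sub>v (X *\<^sub>v b)) - b \<bullet> (G *\<^sub>v (X *\<^sub>v a))"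
    using G a b symmetric_form_comm[OF G G_sym b a]
    by (simp add: mult_add_distrib_mat_vec mult_minus_distrib_mat_vec mult_mat_vec scalar_prod_add_distrib[of _ n]
        scalar_prod_minus_distrib[of _ n] algebra_simps)
  also have "\<dots> = 0" using form_comm[OF a b] by simp
  finally have key: "Im \<mu> * (a \<bullet> (G *\<^sub>v a) + b \<bullet> (G *\<^sub>v b)) = 0" .
  have "a \<noteq> 0\<^sub>v n \<or> b \<noteq> 0\<^sub>v n"
    using v by (auto simp: a_def b_def vec_eq_iff complex_eq_iff)
  hence "0 < a \<bullet> (G *\<^sub>v a) + b \<bullet> (G *\<^sub>v b)"
    using pos_def_matD[OF G_pos_def G] pos_def_mat_nonneg[OF G_pos_def G] a b
    by (meson add_nonneg_pos add_pos_nonneg)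
  thus ?thesis using key by simp
qed

lemma char_poly_splits: "\<exists>rs. char_poly X = (\<Prod>a\<leftarrow>rs. [:- a, 1:])"
proof -
  interpret of_real_poly: map_poly_inj_comm_ring_hom complex_of_real ..
  let ?Xc = "map_mat complex_of_real X"
  have Xc: "?Xc \<in> carrier_mat n n" using X by simp
  obtain cs where cs: "char_poly ?Xc = (\<Prod>a\<leftarrow>cs. [:- a, 1:])"
    using char_poly_factorized[OF Xc] by blast
  have "eigenvalue ?Xc c" if "c \<in> set cs" for c
    using that unfolding eigenvalue_root_char_poly[OF Xc] cs poly_prod_list_zero_iff by auto
  hence real: "of_real (Re c) = c" if "c \<in> set cs" for c
    using complex_eigenvalue_real that by (simp add: complex_eq_iff)
  have "map_poly complex_of_real (char_poly X) = (\<Prod>c\<leftarrow>cs. [:- c, 1:])"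
    unfolding of_real_hom.char_poly_hom[OF X, symmetric] cs ..
  also have "\<dots> = (\<Prod>c\<leftarrow>map (\<lambda>c. of_real (Re c)) cs. [:- c, 1:])"
    using real by (metis (no_types, lifting) map_idI)
  also have "\<dots> = map_poly complex_of_real (\<Prod>a\<leftarrow>map Re cs. [:- a, 1:])"
    by (simp add: of_real_poly.hom_prod_list o_def)
  finally have "char_poly X = (\<Prod>a\<leftarrow>map Re cs. [:- a, 1:])"
    by simp
  thus ?thesis by blast
qed

lemma char_matrix_self_adjoint: "self_adjoint_wrt n G (char_matrix X e)"
proof
  have "G * ((- e) \<cdot>\<^sub>m 1\<^sub>m n) = (- e) \<cdot>\<^sub>m G"
    using G by (metis mult_smult_distrib one_carrier_mat right_mult_one_mat)
  hence "G * char_matrix X e = G * X + (- e) \<cdot>\<^sub>m G"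
    unfolding char_matrix_def using G X by (simp add: mult_add_distrib_mat)
  thus "transpose_mat (G * char_matrix X e) = G * char_matrix X e"
    using G X GX_sym G_sym transpose_add[of "G * X" n n "(- e) \<cdot>\<^sub>m G"]
    by (simp add: transpose_smult_mat)
qed (use G X G_sym G_pos_def char_matrix_def in auto)

lemma kernel_square: "mat_kernel (X * X) = mat_kernel X"
proof
  show "mat_kernel (X * X) \<subseteq> mat_kernel X"
  proof
    fix v assume "v \<in> mat_kernel (X * X)"
    hence v: "v \<in> carrier_vec n" and "X *\<^sub>v (X *\<^sub>v v) = 0\<^sub>v n"
      using mat_kernelD[of "X * X" n n v] X by (auto simp: assoc_mult_mat_vec[of _ n n _ n])
    hence "(X *\<^sub>v v) \<bullet> (G *\<^sub>v (X *\<^sub>v v)) = 0"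
      using form_comm[OF v, of "X *\<^sub>v v"] X G by (simp add: mult_mat_vec_zero_vec)
    hence "X *\<^sub>v v = 0\<^sub>v n" using pos_def_matD[OF G_pos_def G, of "X *\<^sub>v v"] X v by force
    thus "v \<in> mat_kernel X" using X v by (intro mat_kernelI) auto
  qed
qed (rule mat_kernel_mult_subset[OF X X])

lemma diagonalizable: "\<exists>D P Q. similar_mat_wit X D P Q \<and> diagonal_mat D"
proof -
  obtain rs where "char_poly X = (\<Prod>a\<leftarrow>rs. [:- a, 1:])" using char_poly_splits by blast
  then obtain n_as where jnf: "jordan_nf X n_as" using jordan_nf_exists[OF X] by blast
  have "\<forall>(k, a) \<in> set n_as. k = 1"
  proof (clarify)
    fix k e assume ke: "(k, e) \<in> set n_as"
    \<comment> \<open>\<open>(X - e)\<^sup>2\<close> and \<open>X - e\<close> have the same kernel, so no Jordan block has size \<open>\<ge> 2\<close>.\<close>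
    let ?sizes = "map fst [(k, e')\<leftarrow>n_as. e' = e]"
    interpret C: self_adjoint_wrt n G "char_matrix X e" by (rule char_matrix_self_adjoint)
    have "char_matrix X e ^\<^sub>m 2 = char_matrix X e * char_matrix X e"
      by (simp add: numeral_2_eq_2)
    hence "dim_gen_eigenspace X e 2 = dim_gen_eigenspace X e 1"
      using C.kernel_square X by (simp add: dim_gen_eigenspace_def kernel_dim_def)
    hence "(\<Sum>k\<leftarrow>?sizes. min 1 k) = (\<Sum>k\<leftarrow>?sizes. min 2 k)"
      unfolding dim_gen_eigenspace[OF jnf] by simp
    hence "min 1 k = min (2::nat) k"
      using sum_list_mono_eq_imp_eq[of ?sizes "min 1" "min 2"] ke by force
    moreover have "k \<noteq> 0" using jnf ke unfolding jordan_nf_def by force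
    ultimately show "k = 1" by simp
  qed
  moreover obtain P Q where "similar_mat_wit X (jordan_matrix n_as) P Q"
    using jnf unfolding jordan_nf_def similar_mat_def by blast
  ultimately show ?thesis using jordan_matrix_diagonal by blast
qed

end

lemma pos_def_mat_eigenvalue_pos:
  assumes G: "G \<in> carrier_mat n n" and pd: "pos_def_mat G" and ev: "eigenvalue G d"
  shows "0 < d"
proof -
  obtain v where v: "v \<in> carrier_vec n" "v \<noteq> 0\<^sub>v n" and Gv: "G *\<^sub>v v = d \<cdot>\<^sub>v v"
    using ev G unfolding eigenvalue_def eigenvector_def by auto
  have "0 < v \<bullet> (G *\<^sub>v v)" by (rule pos_def_matD[OF pd G v])
  also have "v \<bullet> (G *\<^sub>v v) = d * (v \<bullet> v)" unfolding Gv using v by simp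
  finally show ?thesis using scalar_prod_self_pos[OF v] by (simp add: zero_less_mult_iff)
qed

lemma pos_def_mat_det_pos:
  assumes carr: "G \<in> carrier_mat n n" and sym: "transpose_mat G = G" and pd: "pos_def_mat G"
  shows "0 < det G"
proof -
  interpret self_adjoint_wrt n "1\<^sub>m n" G
    using carr sym pd pos_def_mat_one by unfold_locales auto
  obtain D P Q where wit: "similar_mat_wit G D P Q" and diag: "diagonal_mat D"
    using diagonalizable by blast
  have "0 < D $$ (j, j)" if "j < n" for j
    using pos_def_mat_eigenvalue_pos[OF carr pd] similar_mat_wit_diagonal_eigenvalue_iff[OF carr wit diag]
      that by blast
  thus ?thesis unfolding similar_mat_wit_diagonal_det[OF carr wit diag] by (intro prod_pos) auto
qed

section \<open>The matrices of the problem\<close>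

lemma sum_mult_reindex_le_sum_squares:
  fixes f :: "nat \<Rightarrow> real"
  assumes h: "bij_betw h {..<n} {..<n}"
  shows "(\<Sum>i<n. f i * f (h i)) \<le> (\<Sum>i<n. (f i)\<^sup>2)"
proof -
  have "(\<Sum>i<n. 2 * (f i * f (h i))) \<le> (\<Sum>i<n. (f i)\<^sup>2 + (f (h i))\<^sup>2)"
    by (intro sum_mono) (use sum_squares_bound[of "f i" "f (h i)" for i] in \<open>simp add: mult.assoc\<close>)
  also have "\<dots> = 2 * (\<Sum>i<n. (f i)\<^sup>2)"
    using sum.reindex_bij_betw[OF h, of "\<lambda>i. (f i)\<^sup>2"] by (simp add: sum.distrib)
  finally show ?thesis by (simp add: sum_distrib_left[symmetric])
qed

lemma mod_pred_succ: assumes "(i::nat) < n" shows "((i + n - 1) mod n + 1) mod n = i"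
proof -
  have "((i + n - 1) mod n + 1) mod n = (i + n - 1 + 1) mod n" by (rule mod_add_left_eq)
  also have "i + n - 1 + 1 = i + n" using assms by simp
  finally show ?thesis using assms by simp
qed

lemma mod_succ_pred: assumes "(i::nat) < n" shows "((i + 1) mod n + n - 1) mod n = i"
proof -
  have "(i + 1) mod n + n - 1 = (i + 1) mod n + (n - 1)" using assms by simp
  also have "\<dots> mod n = (i + 1 + (n - 1)) mod n" by (rule mod_add_left_eq)
  also have "i + 1 + (n - 1) = i + n" using assms by simp
  finally show ?thesis using assms by simp
qed

lemma bij_betw_mod_succ: "bij_betw (\<lambda>i. (i + 1) mod n) {..<n} {..<(n::nat)}"
  by (rule bij_betw_byWitness[where f' = "\<lambda>i. (i + n - 1) mod n"])
    (use mod_pred_succ mod_succ_pred in auto)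

lemma bij_betw_mod_pred: "bij_betw (\<lambda>i. (i + n - 1) mod n) {..<n} {..<(n::nat)}"
  by (rule bij_betw_byWitness[where f' = "\<lambda>i. (i + 1) mod n"])
    (use mod_pred_succ mod_succ_pred in auto)

lemma lap_mat_carrier: "lap_mat n \<in> carrier_mat n n"
  unfolding lap_mat_def by simp

lemma lap_mat_index:
  "i < n \<Longrightarrow> j < n \<Longrightarrow> lap_mat n $$ (i, j) =
    (if j = (i + n - 1) mod n then 1 else 0) - (if j = i then 2 else 0) + (if j = (i + 1) mod n then 1 else 0)"
  unfolding lap_mat_def by simp

lemma lap_mat_symmetric: "transpose_mat (lap_mat n) = lap_mat n"
proof (rule eq_matI)
  fix i j assume "i < dim_row (lap_mat n)" "j < dim_col (lap_mat n)"
  hence i: "i < n" and j: "j < n" by (auto simp: lap_mat_def)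
  have "i = (j + n - 1) mod n \<longleftrightarrow> j = (i + 1) mod n"
    using mod_pred_succ[OF j] mod_succ_pred[OF i] by auto
  moreover have "i = (j + 1) mod n \<longleftrightarrow> j = (i + n - 1) mod n"
    using mod_pred_succ[OF i] mod_succ_pred[OF j] by auto
  ultimately show "transpose_mat (lap_mat n) $$ (i, j) = lap_mat n $$ (i, j)"
    using i j lap_mat_carrier[of n] by (simp only: index_transpose_mat(1) lap_mat_index carrier_matD) auto
qed (auto simp: lap_mat_def)

lemma lap_mat_mult_vec:
  "v \<in> carrier_vec n \<Longrightarrow> i < n \<Longrightarrow>
    (lap_mat n *\<^sub>v v) $ i = v $ ((i + n - 1) mod n) - 2 * v $ i + v $ ((i + 1) mod n)"
  unfolding lap_mat_def
  by (simp add: scalar_prod_def algebra_simps sum.distrib sum_subtractf if_distrib[of "\<lambda>x. _ * x"]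
      cong: if_cong)

lemma lap_mat_form_nonpos:
  assumes v: "v \<in> carrier_vec n"
  shows "v \<bullet> (lap_mat n *\<^sub>v v) \<le> 0"
proof -
  have "v \<bullet> (lap_mat n *\<^sub>v v) = (\<Sum>i<n. v $ i * (lap_mat n *\<^sub>v v) $ i)"
    using v lap_mat_carrier[of n] by (simp add: scalar_prod_def atLeast0LessThan del: index_mult_mat_vec)
  also have "\<dots> = (\<Sum>i<n. v $ i * (v $ ((i + n - 1) mod n) - 2 * v $ i + v $ ((i + 1) mod n)))"
    using v by (intro sum.cong) (simp_all add: lap_mat_mult_vec del: index_mult_mat_vec)
  also have "\<dots> = (\<Sum>i<n. v $ i * v $ ((i + n - 1) mod n))
      - 2 * (\<Sum>i<n. (v $ i)\<^sup>2) + (\<Sum>i<n. v $ i * v $ ((i + 1) mod n))"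
    by (simp add: sum.distrib sum_subtractf sum_distrib_left algebra_simps power2_eq_square)
  finally show ?thesis
    using sum_mult_reindex_le_sum_squares[OF bij_betw_mod_succ[of n], of "\<lambda>i. v $ i"]
      sum_mult_reindex_le_sum_squares[OF bij_betw_mod_pred[of n], of "\<lambda>i. v $ i"] by simp
qed

lemma A_mat_carrier: "A_mat \<sigma> n \<in> carrier_mat n n"
  unfolding A_mat_def by (rule minus_carrier_mat, rule smult_carrier_mat, rule lap_mat_carrier)

lemma A_mat_symmetric: "transpose_mat (A_mat \<sigma> n) = A_mat \<sigma> n"
  unfolding A_mat_def using transpose_minus[of "1\<^sub>m n" n n "\<sigma> \<cdot>\<^sub>m lap_mat n"] lap_mat_carrier[of n]
  by (simp add: transpose_smult_mat lap_mat_symmetric)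

lemma A_mat_form_ge:
  assumes v: "v \<in> carrier_vec n" and \<sigma>: "0 \<le> \<sigma>"
  shows "v \<bullet> v \<le> v \<bullet> (A_mat \<sigma> n *\<^sub>v v)"
proof -
  have "A_mat \<sigma> n *\<^sub>v v = v - \<sigma> \<cdot>\<^sub>v (lap_mat n *\<^sub>v v)"
    unfolding A_mat_def using v lap_mat_carrier[of n]
      minus_mult_distrib_mat_vec[of "1\<^sub>m n" n n "\<sigma> \<cdot>\<^sub>m lap_mat n" v]
    by (simp add: smult_mat_mult_vec)
  hence "v \<bullet> (A_mat \<sigma> n *\<^sub>v v) = v \<bullet> v - \<sigma> * (v \<bullet> (lap_mat n *\<^sub>v v))"
    using v lap_mat_carrier[of n] by (simp add: scalar_prod_minus_distrib[of _ n])
  thus ?thesis using lap_mat_form_nonpos[OF v] \<sigma> by (simp add: mult_nonneg_nonpos)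
qed

lemma A_mat_pos_def: "0 \<le> \<sigma> \<Longrightarrow> pos_def_mat (A_mat \<sigma> n)"
  by (rule pos_def_matI_form_ge[OF A_mat_carrier A_mat_form_ge])

lemma A_mat_A_inv:
  assumes "0 \<le> \<sigma>"
  shows "A_inv \<sigma> n \<in> carrier_mat n n" "A_mat \<sigma> n * A_inv \<sigma> n = 1\<^sub>m n"
proof -
  have "0 < det (A_mat \<sigma> n)"
    using pos_def_mat_det_pos[OF A_mat_carrier A_mat_symmetric A_mat_pos_def[OF assms]] .
  hence "A_mat \<sigma> n \<in> Units (ring_mat TYPE(real) n ())"
    using det_non_zero_imp_unit[OF A_mat_carrier[of \<sigma> n]] by simp
  then obtain B where "mat_inverse (A_mat \<sigma> n) = Some B"
    using mat_inverse(1)[OF A_mat_carrier] by fastforce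
  thus "A_inv \<sigma> n \<in> carrier_mat n n" "A_mat \<sigma> n * A_inv \<sigma> n = 1\<^sub>m n"
    using mat_inverse(2)[OF A_mat_carrier] unfolding A_inv_def by auto
qed

lemma B_mat_carrier: "B_mat n \<in> carrier_mat n n"
  unfolding B_mat_def by simp

lemma B_mat_symmetric: "transpose_mat (B_mat n) = B_mat n"
  unfolding B_mat_def by (rule eq_matI) auto

lemma B_mat_mult_vec:
  "v \<in> carrier_vec n \<Longrightarrow> i < n \<Longrightarrow> (B_mat n *\<^sub>v v) $ i = (if i = n - 1 then - v $ i else v $ i)"
  unfolding B_mat_def by (simp add: scalar_prod_def if_distrib[of "\<lambda>x. x * _"] cong: if_cong)

lemma B_mat_form:
  assumes v: "v \<in> carrier_vec n" and n: "0 < n"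
  shows "v \<bullet> (B_mat n *\<^sub>v v) = v \<bullet> v - 2 * (v $ (n - 1))\<^sup>2"
proof -
  have "v \<bullet> (B_mat n *\<^sub>v v) = (\<Sum>i<n. (v $ i)\<^sup>2 - (if i = n - 1 then 2 * (v $ (n - 1))\<^sup>2 else 0))"
    using v B_mat_carrier[of n]
    by (auto simp: scalar_prod_def atLeast0LessThan B_mat_mult_vec power2_eq_square
        simp del: index_mult_mat_vec intro!: sum.cong)
  also have "\<dots> = v \<bullet> v - 2 * (v $ (n - 1))\<^sup>2"
    using v n by (simp add: sum_subtractf scalar_prod_def atLeast0LessThan power2_eq_square)
  finally show ?thesis .
qed

lemma B_mat_form_abs_le:
  assumes v: "v \<in> carrier_vec n" and n: "0 < n"
  shows "\<bar>v \<bullet> (B_mat n *\<^sub>v v)\<bar> \<le> v \<bullet> v"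
proof -
  have "(v $ (n - 1))\<^sup>2 \<le> (\<Sum>i<n. (v $ i)\<^sup>2)"
    by (rule member_le_sum) (use n in auto)
  moreover have "v \<bullet> v = (\<Sum>i<n. (v $ i)\<^sup>2)"
    using v by (simp add: scalar_prod_def atLeast0LessThan power2_eq_square)
  ultimately show ?thesis
    unfolding B_mat_form[OF v n] abs_le_iff using zero_le_power2[of "v $ (n - 1)"] by linarith
qed

lemma B_mat_form_nonneg:
  assumes v: "v \<in> carrier_vec n" and n: "0 < n" and last: "v $ (n - 1) = 0"
  shows "0 \<le> v \<bullet> (B_mat n *\<^sub>v v)"
  unfolding B_mat_form[OF v n] last
  using v by (simp add: scalar_prod_def sum_nonneg)

lemma B_mat_mult_vec_eq_zero: "v \<in> carrier_vec n \<Longrightarrow> B_mat n *\<^sub>v v = 0\<^sub>v n \<Longrightarrow> v = 0\<^sub>v n"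
  by (rule eq_vecI) (auto simp: vec_eq_iff B_mat_mult_vec split: if_splits)

lemma det_B_mat: "0 < n \<Longrightarrow> det (B_mat n) = -1"
proof -
  assume n: "0 < n"
  have "upper_triangular (B_mat n)" unfolding B_mat_def upper_triangular_def by simp
  hence "det (B_mat n) = (\<Prod>i<n. if i = n - 1 then -1 else 1)"
    using det_upper_triangular[OF _ B_mat_carrier] by (simp add: prod_list_diag_prod atLeast0LessThan B_mat_def)
  also have "\<dots> = -1"
    using prod.remove[of "{..<n}" "n - 1" "\<lambda>i. if i = n - 1 then -1 else (1::real)"] n by simp
  finally show ?thesis .
qed

section \<open>The eigenvalues of \<open>A\<^sup>-\<^sup>1 B\<close>\<close>

text \<open>\<open>M\<close> stands for \<open>A\<^sup>-\<^sup>1 B\<close>: its eigenpairs are the solutions of \<open>B v = \<mu> A v\<close>.\<close>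

locale B_mat_pencil =
  fixes n :: nat and A M :: "real mat"
  assumes n: "0 < n" and A: "A \<in> carrier_mat n n" and M: "M \<in> carrier_mat n n"
    and A_sym: "transpose_mat A = A" and A_ge: "\<And>v. v \<in> carrier_vec n \<Longrightarrow> v \<bullet> v \<le> v \<bullet> (A *\<^sub>v v)"
    and AM: "A * M = B_mat n"
begin

lemma A_pos_def: "pos_def_mat A"
  by (rule pos_def_matI_form_ge[OF A A_ge])

lemma self_adjoint: "self_adjoint_wrt n A M"
  by unfold_locales (use A M A_sym A_pos_def AM B_mat_symmetric in auto)

lemma eigenvector_pencil:
  assumes "eigenvector M v \<mu>"
  shows "v \<in> carrier_vec n" "v \<noteq> 0\<^sub>v n" "B_mat n *\<^sub>v v = \<mu> \<cdot>\<^sub>v (A *\<^sub>v v)"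
proof -
  show v: "v \<in> carrier_vec n" "v \<noteq> 0\<^sub>v n" using assms M unfolding eigenvector_def by auto
  have "B_mat n *\<^sub>v v = A *\<^sub>v (M *\<^sub>v v)" unfolding AM[symmetric] using A M v by simp
  also have "\<dots> = \<mu> \<cdot>\<^sub>v (A *\<^sub>v v)" using assms A M v unfolding eigenvector_def by (simp add: mult_mat_vec)
  finally show "B_mat n *\<^sub>v v = \<mu> \<cdot>\<^sub>v (A *\<^sub>v v)" .
qed

lemma eigenvector_form:
  assumes "eigenvector M v \<mu>"
  shows "v \<bullet> (B_mat n *\<^sub>v v) = \<mu> * (v \<bullet> (A *\<^sub>v v))" "0 < v \<bullet> (A *\<^sub>v v)"
  using eigenvector_pencil[OF assms] A pos_def_matD[OF A_pos_def A] by simp_all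

lemma eigenvalue_abs_le_1:
  assumes "eigenvalue M \<mu>"
  shows "\<bar>\<mu>\<bar> \<le> 1"
proof -
  obtain v where v: "eigenvector M v \<mu>" using assms unfolding eigenvalue_def by blast
  note v' = eigenvector_pencil[OF v] and form = eigenvector_form[OF v]
  have "\<bar>\<mu>\<bar> * (v \<bullet> (A *\<^sub>v v)) = \<bar>v \<bullet> (B_mat n *\<^sub>v v)\<bar>"
    using form by (simp add: abs_mult)
  also have "\<dots> \<le> v \<bullet> (A *\<^sub>v v)"
    using B_mat_form_abs_le[OF v'(1) n] A_ge[OF v'(1)] by linarith
  finally show ?thesis using form(2) by simp
qed

lemma eigenvalue_nonzero:
  assumes "eigenvalue M \<mu>"
  shows "\<mu> \<noteq> 0"
proof
  assume "\<mu> = 0"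
  obtain v where v: "eigenvector M v \<mu>" using assms unfolding eigenvalue_def by blast
  note v' = eigenvector_pencil[OF v]
  have "B_mat n *\<^sub>v v = 0\<^sub>v n" unfolding v'(3) \<open>\<mu> = 0\<close> using A v'(1) by auto
  thus False using B_mat_mult_vec_eq_zero[OF v'(1)] v'(2) by blast
qed

lemma det_neg: "det M < 0"
proof -
  have "det A * det M < 0" using det_mult[OF A M] det_B_mat[OF n] unfolding AM by simp
  thus ?thesis using pos_def_mat_det_pos[OF A A_sym A_pos_def] by (simp add: mult_less_0_iff)
qed

lemma negative_eigenvectors_span_form_neg:
  assumes a: "eigenvector M a \<alpha>" and b: "eigenvector M b \<beta>" and \<alpha>: "\<alpha> < 0" and \<beta>: "\<beta> < 0"
    and x: "s \<cdot>\<^sub>v a + t \<cdot>\<^sub>v b \<noteq> 0\<^sub>v n"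
  shows "(s \<cdot>\<^sub>v a + t \<cdot>\<^sub>v b) \<bullet> (B_mat n *\<^sub>v (s \<cdot>\<^sub>v a + t \<cdot>\<^sub>v b)) < 0"
    (is "?x \<bullet> (B_mat n *\<^sub>v ?x) < 0")
proof -
  note a' = eigenvector_pencil[OF a] and b' = eigenvector_pencil[OF b]
  define p q r where "p = a \<bullet> (A *\<^sub>v a)" and "q = b \<bullet> (A *\<^sub>v b)" and "r = a \<bullet> (A *\<^sub>v b)"
  have ba: "b \<bullet> (A *\<^sub>v a) = r" unfolding r_def by (rule symmetric_form_comm[OF A A_sym b'(1) a'(1)])
  have aBb: "a \<bullet> (B_mat n *\<^sub>v b) = \<beta> * r" unfolding b'(3) r_def using A a' b' by simp
  have bBa: "b \<bullet> (B_mat n *\<^sub>v a) = \<alpha> * r" unfolding a'(3) ba[symmetric] using A a' b' by simp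
  have xB: "?x \<bullet> (B_mat n *\<^sub>v ?x) = s * s * (\<alpha> * p) + s * t * (\<beta> * r) + t * s * (\<alpha> * r) + t * t * (\<beta> * q)"
    using form_lincomb[OF B_mat_carrier a'(1) b'(1)] aBb bBa eigenvector_form(1)[OF a] eigenvector_form(1)[OF b]
    unfolding p_def q_def by simp
  have neg: "\<alpha> * p < 0" "\<beta> * q < 0"
    unfolding p_def q_def using eigenvector_form(2)[OF a] eigenvector_form(2)[OF b] \<alpha> \<beta>
    by (simp_all add: mult_neg_pos)
  \<comment> \<open>By symmetry of \<open>B\<close>, either \<open>\<alpha> = \<beta>\<close> or \<open>a\<close> and \<open>b\<close> are orthogonal for \<open>A\<close>.\<close>
  have "\<alpha> = \<beta> \<or> r = 0"
    using symmetric_form_comm[OF B_mat_carrier B_mat_symmetric a'(1) b'(1)] aBb bBa by auto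
  thus ?thesis
  proof
    assume "\<alpha> = \<beta>"
    moreover have "?x \<bullet> (A *\<^sub>v ?x) = s * s * p + s * t * r + t * s * r + t * t * q"
      using form_lincomb[OF A a'(1) b'(1)] ba unfolding p_def q_def r_def by simp
    ultimately have "?x \<bullet> (B_mat n *\<^sub>v ?x) = \<alpha> * (?x \<bullet> (A *\<^sub>v ?x))" unfolding xB by (simp add: algebra_simps)
    thus ?thesis using pos_def_matD[OF A_pos_def A _ x] a' b' \<alpha> by (simp add: mult_neg_pos)
  next
    assume "r = 0"
    have "0 < s * s \<or> 0 < t * t" using x a' b' by (auto simp: zero_less_mult_iff)
    hence "s * s * (\<alpha> * p) < 0 \<or> t * t * (\<beta> * q) < 0" using neg mult_pos_neg by blast
    moreover have "s * s * (\<alpha> * p) \<le> 0" "t * t * (\<beta> * q) \<le> 0" using neg by (simp_all add: mult_nonneg_nonpos)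
    moreover have "?x \<bullet> (B_mat n *\<^sub>v ?x) = s * s * (\<alpha> * p) + t * t * (\<beta> * q)" unfolding xB \<open>r = 0\<close> by simp
    ultimately show ?thesis by linarith
  qed
qed

lemma negative_eigenvectors_dependent:
  assumes a: "eigenvector M a \<alpha>" and b: "eigenvector M b \<beta>" and "\<alpha> < 0" "\<beta> < 0"
  shows "\<exists>s t. (s \<noteq> 0 \<or> t \<noteq> 0) \<and> s \<cdot>\<^sub>v a + t \<cdot>\<^sub>v b = 0\<^sub>v n"
proof -
  note a' = eigenvector_pencil[OF a] and b' = eigenvector_pencil[OF b]
  obtain s t where st: "s \<noteq> 0 \<or> t \<noteq> 0" and last: "s * a $ (n - 1) + t * b $ (n - 1) = 0"
  proof (cases "b $ (n - 1) = 0")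
    case True thus ?thesis using that[of 0 1] by simp
  next
    case False thus ?thesis using that[of "b $ (n - 1)" "- a $ (n - 1)"] by simp
  qed
  let ?x = "s \<cdot>\<^sub>v a + t \<cdot>\<^sub>v b"
  have "?x \<in> carrier_vec n" "?x $ (n - 1) = 0" using a' b' n last by auto
  hence "0 \<le> ?x \<bullet> (B_mat n *\<^sub>v ?x)" by (rule B_mat_form_nonneg[OF _ n])
  hence "?x = 0\<^sub>v n" using negative_eigenvectors_span_form_neg[OF assms] by fastforce
  thus ?thesis using st by blast
qed

lemma sorted_diagonal_signs:
  assumes n2: "2 \<le> n" and wit: "similar_mat_wit M D P Q" and diag: "diagonal_mat D"
    and sorted: "\<forall>i j. i \<le> j \<and> j < n \<longrightarrow> D $$ (j, j) \<le> D $$ (i, i)"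
  shows "D $$ (n - 1, n - 1) < 0" "0 < D $$ (n - 2, n - 2)"
proof -
  have ev: "eigenvector M (col P j) (D $$ (j, j))" if "j < n" for j
    by (rule similar_mat_wit_diagonal_eigenvector[OF M wit diag that])
  show last: "D $$ (n - 1, n - 1) < 0"
  proof (rule ccontr)
    assume neg: "\<not> D $$ (n - 1, n - 1) < 0"
    have "0 \<le> D $$ (j, j)" if "j < n" for j
    proof -
      from that have "j \<le> n - 1" "n - 1 < n" by auto
      with sorted have "D $$ (n - 1, n - 1) \<le> D $$ (j, j)" by blast
      with neg show ?thesis by simp
    qed
    hence "0 \<le> det M" unfolding similar_mat_wit_diagonal_det[OF M wit diag] by (intro prod_nonneg) auto
    thus False using det_neg by simp
  qed
  show "0 < D $$ (n - 2, n - 2)"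
  proof (rule ccontr)
    assume "\<not> 0 < D $$ (n - 2, n - 2)"
    moreover have "D $$ (n - 2, n - 2) \<noteq> 0"
      using eigenvalue_nonzero ev[of "n - 2"] n2 unfolding eigenvalue_def by auto
    ultimately have "D $$ (n - 2, n - 2) < 0" by simp
    moreover have "n - 2 < n" "n - 1 < n" using n2 by auto
    ultimately obtain s t where "s \<noteq> 0 \<or> t \<noteq> 0" "s \<cdot>\<^sub>v col P (n - 2) + t \<cdot>\<^sub>v col P (n - 1) = 0\<^sub>v n"
      using negative_eigenvectors_dependent[OF ev ev _ last] by blast
    moreover have "P \<in> carrier_mat n n" "Q \<in> carrier_mat n n" "Q * P = 1\<^sub>m n"
      using similar_mat_witD2[OF M wit] by auto
    ultimately show False using cols_independent[of P n Q "n - 2" "n - 1" s t] n2 by auto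
  qed
qed

lemma sorted_diagonal_negative_eigenvalues:
  assumes n2: "2 \<le> n" and wit: "similar_mat_wit M D P Q" and diag: "diagonal_mat D"
    and sorted: "\<forall>i j. i \<le> j \<and> j < n \<longrightarrow> D $$ (j, j) \<le> D $$ (i, i)"
  shows "{\<mu>. eigenvalue M \<mu> \<and> \<mu> < 0} = {D $$ (n - 1, n - 1)}"
proof -
  note eig = similar_mat_wit_diagonal_eigenvalue_iff[OF M wit diag]
  note signs = sorted_diagonal_signs[OF assms]
  have "j = n - 1" if "j < n" "D $$ (j, j) < 0" for j
  proof (rule ccontr)
    assume "j \<noteq> n - 1"
    with that(1) have "j \<le> n - 2" "n - 2 < n" using n2 by auto
    with sorted have "D $$ (n - 2, n - 2) \<le> D $$ (j, j)" by blast
    thus False using signs(2) that(2) by simp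
  qed
  moreover have "eigenvalue M (D $$ (n - 1, n - 1))"
    unfolding eig using n2 by (intro exI[of _ "n - 1"]) auto
  ultimately show ?thesis using signs(1) unfolding eig by blast
qed

end

lemma B_mat_pencil_A_inv:
  assumes "2 \<le> n" "0 \<le> \<sigma>"
  shows "B_mat_pencil n (A_mat \<sigma> n) (A_inv \<sigma> n * B_mat n)"
proof
  show "A_inv \<sigma> n * B_mat n \<in> carrier_mat n n"
    using A_mat_A_inv(1)[OF assms(2), of n] B_mat_carrier[of n] by (rule mult_carrier_mat)
  show "A_mat \<sigma> n * (A_inv \<sigma> n * B_mat n) = B_mat n"
    using A_mat_A_inv[OF assms(2), of n] A_mat_carrier[of \<sigma> n] B_mat_carrier[of n]
    by (simp add: assoc_mult_mat[symmetric, of _ n n _ n _ n])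
qed (use assms A_mat_carrier A_mat_symmetric A_mat_form_ge in auto)

theorem lemma3p1:
  fixes n :: nat and \<sigma> :: real
  assumes "n \<ge> 2" and "\<sigma> \<ge> 0"
  shows "(\<exists>P D. P \<in> carrier_mat n n \<and> D \<in> carrier_mat n n \<and> invertible_mat P \<and> diagonal_mat D
           \<and> A_inv \<sigma> n * B_mat n * P = P * D
           \<and> (\<forall>i j. i \<le> j \<and> j < n \<longrightarrow> D $$ (j, j) \<le> D $$ (i, i))
           \<and> D $$ (0, 0) \<le> 1
           \<and> D $$ (n - 2, n - 2) > 0
           \<and> D $$ (n - 1, n - 1) < 0
           \<and> D $$ (n - 1, n - 1) \<ge> -1)
         \<and> card {\<mu>. eigenvalue (A_inv \<sigma> n * B_mat n) \<mu> \<and> \<mu> < 0} = 1"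
proof -
  interpret B_mat_pencil n "A_mat \<sigma> n" "A_inv \<sigma> n * B_mat n"
    using B_mat_pencil_A_inv assms by simp
  obtain D0 P0 Q0 where "similar_mat_wit (A_inv \<sigma> n * B_mat n) D0 P0 Q0" "diagonal_mat D0"
    using self_adjoint_wrt.diagonalizable[OF self_adjoint] by blast
  then obtain D P Q where wit: "similar_mat_wit (A_inv \<sigma> n * B_mat n) D P Q" and diag: "diagonal_mat D"
    and sorted: "\<forall>i j. i \<le> j \<and> j < n \<longrightarrow> D $$ (j, j) \<le> D $$ (i, i)"
    using similar_mat_wit_diagonal_sorted[OF M] by blast
  have bound: "\<bar>D $$ (j, j)\<bar> \<le> 1" if "j < n" for j
    using eigenvalue_abs_le_1 similar_mat_wit_diagonal_eigenvalue_iff[OF M wit diag] that by blast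
  have "D $$ (0, 0) \<le> 1" "-1 \<le> D $$ (n - 1, n - 1)"
    using bound[of 0] bound[of "n - 1"] assms(1) by (simp_all add: abs_le_iff)
  moreover have "P \<in> carrier_mat n n" "D \<in> carrier_mat n n" using similar_mat_witD2[OF M wit] by auto
  moreover have "card {\<mu>. eigenvalue (A_inv \<sigma> n * B_mat n) \<mu> \<and> \<mu> < 0} = 1"
    using sorted_diagonal_negative_eigenvalues[OF assms(1) wit diag sorted] by simp
  ultimately show ?thesis
    using similar_mat_wit_mult_right[OF wit M] similar_mat_wit_invertible[OF M wit] diag sorted
      sorted_diagonal_signs[OF assms(1) wit diag sorted] by blast
qed

end
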